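(* Let $1\le p<\infty$, let $N\ge1$, let $H$ be a Hilbert space and let $\pi:B(\ell^2_N)\to B(H)$ be a unital $*$-representation. Then for every $n\ge1$ and every $[T_{ij}]\in M_n(B(\ell^2_N))$, $$\|[T_{ij}]\|_{p,M_n(B(\ell^2_N))}\le\|[\pi(T_{ij})]\|_{p,M_n(B(H))}.$$
   Context: For a Banach space $X$ and $[T_{ij}]_{1\le i,j\le n}\in M_n(B(X))$, $\|[T_{ij}]\|_{p,M_n(B(X))}$ is the norm of $[T_{ij}]$ as an operator on $\ell^p_n(X)$, i.e. $\sup\{(\sum_i\|\sum_jT_{ij}x_j\|^p)^{1/p}:x_j\in X,\ \sum_j\|x_j\|^p\le1\}$. *)

theory Defs
  imports "HOL-Analysis.Analysis"
begin

text \<open>A complex Hilbert space structure on a real Banach space 'h: a complex scalar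
multiplication sc extending the real one, and a complex inner product ip
(linear in the second argument) inducing the given norm.  Completeness comes
from the type class banach.\<close>
definition complex_hilbert ::
  "(complex \<Rightarrow> 'h::real_normed_vector \<Rightarrow> 'h) \<Rightarrow> ('h \<Rightarrow> 'h \<Rightarrow> complex) \<Rightarrow> bool" where
  "complex_hilbert sc ip \<longleftrightarrow>
     (\<forall>r x. sc (complex_of_real r) x = r *\<^sub>R x) \<and>
     (\<forall>a b x. sc (a * b) x = sc a (sc b x)) \<and>
     (\<forall>a x y. sc a (x + y) = sc a x + sc a y) \<and>
     (\<forall>a b x. sc (a + b) x = sc a x + sc b x) \<and>
     (\<forall>x y. ip x y = cnj (ip y x)) \<and>
     (\<forall>x y z. ip x (y + z) = ip x y + ip x z) \<and>
     (\<forall>a x y. ip x (sc a y) = a * ip x y) \<and>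
     (\<forall>x. ip x x = complex_of_real ((norm x)\<^sup>2))"

definition bounded_cop :: "(complex \<Rightarrow> 'h::real_normed_vector \<Rightarrow> 'h) \<Rightarrow> ('h \<Rightarrow> 'h) \<Rightarrow> bool" where
  "bounded_cop sc A \<longleftrightarrow>
     (\<forall>x y. A (x + y) = A x + A y) \<and>
     (\<forall>a x. A (sc a x) = sc a (A x)) \<and>
     (\<exists>K. \<forall>x. norm (A x) \<le> K * norm x)"

text \<open>B(l^2_N) is identified with N x N complex matrices acting on complex^'n
(whose norm is the Euclidean l^2 norm); its involution is the conjugate transpose.\<close>
definition conj_transpose :: "complex^'n^'n \<Rightarrow> complex^'n^'n" where
  "conj_transpose A = (\<chi> i j. cnj (A $ j $ i))"

definition unital_star_rep ::
  "(complex \<Rightarrow> 'h::real_normed_vector \<Rightarrow> 'h) \<Rightarrow> ('h \<Rightarrow> 'h \<Rightarrow> complex) \<Rightarrow>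
   (complex^'n::finite^'n \<Rightarrow> 'h \<Rightarrow> 'h) \<Rightarrow> bool" where
  "unital_star_rep sc ip \<pi> \<longleftrightarrow>
     (\<forall>A. bounded_cop sc (\<pi> A)) \<and>
     (\<forall>A B x. \<pi> (A + B) x = \<pi> A x + \<pi> B x) \<and>
     (\<forall>c A x. \<pi> (\<chi> i j. c * A $ i $ j) x = sc c (\<pi> A x)) \<and>
     (\<forall>A B x. \<pi> (A ** B) x = \<pi> A (\<pi> B x)) \<and>
     (\<forall>x. \<pi> (mat 1) x = x) \<and>
     (\<forall>A x y. ip (\<pi> A x) y = ip x (\<pi> (conj_transpose A) y))"

definition mat_pnorm :: "real \<Rightarrow> nat \<Rightarrow> (nat \<Rightarrow> nat \<Rightarrow> 'x::real_normed_vector \<Rightarrow> 'x) \<Rightarrow> real" where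
  "mat_pnorm p n T =
     (SUP x \<in> {x :: nat \<Rightarrow> 'x. (\<Sum>j<n. norm (x j) powr p) \<le> 1}.
        (\<Sum>i<n. norm (\<Sum>j<n. T i j (x j)) powr p) powr (1 / p))"

end

theory Submission
  imports Defs
begin

text \<open>
  Every unital *-representation \<pi> of the matrix algebra B(l^2_N) on a
  nonzero Hilbert space H contains the identity representation: pick a matrix unit
  P = E_aa; \<pi>(P) is a nonzero projection, so there is a unit vector e with \<pi>(P) e = e.
  The map V v = \<pi>(C_a(v)) e, where C_a(v) is the matrix whose a-th column is v and whose
  other columns vanish, is additive, isometric (because C_a(v)^* C_a(v) = |v|^2 P) and
  intertwines: \<pi>(A) (V v) = V (A v).  Applying V coordinatewise maps the unit ball of
  l^p_n(l^2_N) isometrically into the unit ball of l^p_n(H) and transforms the action of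
  [T_ij] into that of [\<pi>(T_ij)]; since the latter supremum is finite (the operators
  \<pi>(T_ij) are bounded), the inequality of the operator norms follows.
\<close>

definition matrix_unit :: "'n::finite \<Rightarrow> 'n \<Rightarrow> complex^'n^'n" where
  "matrix_unit k l = (\<chi> i j. if i = k \<and> j = l then 1 else 0)"

definition column_matrix :: "'n::finite \<Rightarrow> complex^'n \<Rightarrow> complex^'n^'n" where
  "column_matrix a v = (\<chi> i j. if j = a then v $ i else 0)"

lemma matrix_unit_mult:
  "matrix_unit k l ** matrix_unit l' m = (if l = l' then matrix_unit k m else 0)"
  by (auto simp: vec_eq_iff matrix_unit_def matrix_matrix_mult_def
      if_distrib[of "\<lambda>x. x * _"] sum.delta cong: if_cong)

lemma mat1_eq_sum_matrix_units: "mat 1 = (\<Sum>k\<in>UNIV. matrix_unit k k)"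
  by (auto simp: vec_eq_iff matrix_unit_def mat_def sum_component intro!: sum.neutral)

lemma column_matrix_mult: "A ** column_matrix a v = column_matrix a (A *v v)"
  by (auto simp: vec_eq_iff column_matrix_def matrix_matrix_mult_def matrix_vector_mult_def
      if_distrib[of "\<lambda>x. _ * x"] cong: if_cong)

lemma column_matrix_add: "column_matrix a (v + w) = column_matrix a v + column_matrix a w"
  by (auto simp: vec_eq_iff column_matrix_def)

text \<open>C_a(v)^* C_a(v) = |v|^2 E_aa; this is what makes the intertwiner isometric.\<close>
lemma conj_transpose_column_matrix_mult:
  "conj_transpose (column_matrix a v) ** column_matrix a v =
     (\<chi> i j. complex_of_real ((norm v)\<^sup>2) * matrix_unit a a $ i $ j)"
proof -
  have "(norm v)\<^sup>2 = (\<Sum>k\<in>UNIV. (cmod (v $ k))\<^sup>2)"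
    by (simp add: norm_vec_def L2_set_def sum_nonneg)
  then have "complex_of_real ((norm v)\<^sup>2) = (\<Sum>k\<in>UNIV. cnj (v $ k) * v $ k)"
    by (simp add: complex_norm_square mult.commute del: of_real_power)
  then show ?thesis
    by (auto simp: vec_eq_iff column_matrix_def conj_transpose_def matrix_unit_def
        matrix_matrix_mult_def)
qed

context
  fixes sc :: "complex \<Rightarrow> 'h::real_normed_vector \<Rightarrow> 'h"
    and ip :: "'h \<Rightarrow> 'h \<Rightarrow> complex"
    and \<pi> :: "complex^'n::finite^'n \<Rightarrow> 'h \<Rightarrow> 'h"
  assumes rep: "unital_star_rep sc ip \<pi>"
begin

lemma rep_additive_matrix: "Modules.additive (\<lambda>A. \<pi> A x)"
  using rep by (simp add: Modules.additive_def unital_star_rep_def)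

lemma rep_additive_vector: "Modules.additive (\<pi> A)"
  using rep by (simp add: Modules.additive_def unital_star_rep_def bounded_cop_def)

lemma rep_mult: "\<pi> (A ** B) x = \<pi> A (\<pi> B x)"
  using rep by (simp add: unital_star_rep_def)

lemma rep_bounded: "\<exists>K. \<forall>x. norm (\<pi> A x) \<le> K * norm x"
  using rep by (simp add: unital_star_rep_def bounded_cop_def)

lemma rep_scale_real:
  assumes "complex_hilbert sc ip"
  shows "\<pi> A (r *\<^sub>R x) = r *\<^sub>R \<pi> A x"
proof -
  have "\<pi> A (sc (complex_of_real r) x) = sc (complex_of_real r) (\<pi> A x)"
    using rep unfolding unital_star_rep_def bounded_cop_def by blast
  moreover have "\<And>y. sc (complex_of_real r) y = r *\<^sub>R y"
    using assms unfolding complex_hilbert_def by blast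
  ultimately show ?thesis
    by simp
qed

text \<open>On a nonzero space, \<pi>(E_aa) is nonzero: otherwise
  h = \<pi>(1) h = \<Sum>_k \<pi>(E_ka) \<pi>(E_aa) \<pi>(E_ak) h = 0.\<close>
lemma rep_matrix_unit_nonzero:
  fixes h :: 'h
  assumes "h \<noteq> 0"
  shows "\<exists>z. \<pi> (matrix_unit a a) z \<noteq> 0"
proof (rule ccontr)
  assume "\<not> ?thesis"
  then have vanish: "\<pi> (matrix_unit a a) z = 0" for z
    by blast
  have "h = \<pi> (mat 1) h"
    using rep by (simp add: unital_star_rep_def)
  also have "\<dots> = (\<Sum>k\<in>UNIV. \<pi> (matrix_unit k k) h)"
    by (simp add: mat1_eq_sum_matrix_units Modules.additive.sum[OF rep_additive_matrix])
  also have "\<dots> = (\<Sum>k\<in>UNIV. \<pi> (matrix_unit k a ** (matrix_unit a a ** matrix_unit a k)) h)"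
    by (simp add: matrix_unit_mult)
  also have "\<dots> = 0"
    by (simp add: rep_mult vanish Modules.additive.zero[OF rep_additive_vector])
  finally show False
    using assms by simp
qed

lemma rep_fixed_unit_vector:
  fixes h :: 'h
  assumes "complex_hilbert sc ip" and "h \<noteq> 0"
  obtains e where "\<pi> (matrix_unit a a) e = e" and "norm e = 1"
proof -
  obtain z where z: "\<pi> (matrix_unit a a) z \<noteq> 0"
    using rep_matrix_unit_nonzero[OF assms(2)] by blast
  define e0 where "e0 = \<pi> (matrix_unit a a) z"
  have fixed: "\<pi> (matrix_unit a a) e0 = e0"
    unfolding e0_def rep_mult[symmetric] by (simp add: matrix_unit_mult)
  have "\<pi> (matrix_unit a a) ((1 / norm e0) *\<^sub>R e0) = (1 / norm e0) *\<^sub>R e0"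
    by (simp add: rep_scale_real[OF assms(1)] fixed)
  moreover have "norm ((1 / norm e0) *\<^sub>R e0) = 1"
    using z e0_def by simp
  ultimately show ?thesis
    using that by blast
qed

text \<open>With such an e, v \<mapsto> \<pi>(C_a(v)) e preserves norms:
  |\<pi>(C_a v) e|^2 = <e, \<pi>(C_a(v)^* C_a(v)) e> = |v|^2 <e, \<pi>(E_aa) e> = |v|^2.\<close>
lemma column_map_norm:
  assumes hilbert: "complex_hilbert sc ip"
    and fixed: "\<pi> (matrix_unit a a) e = e" and unit: "norm e = 1"
  shows "norm (\<pi> (column_matrix a v) e) = norm v"
proof -
  define c where "c = complex_of_real ((norm v)\<^sup>2)"
  have ip_norm: "\<And>x. ip x x = complex_of_real ((norm x)\<^sup>2)"
    and ip_scale: "\<And>x y. ip x (sc c y) = c * ip x y"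
    using hilbert unfolding complex_hilbert_def by blast+
  let ?w = "\<pi> (column_matrix a v) e"
  have "complex_of_real ((norm ?w)\<^sup>2) = ip ?w ?w"
    by (simp add: ip_norm)
  also have "\<dots> = ip e (\<pi> (conj_transpose (column_matrix a v)) ?w)"
    using rep by (simp add: unital_star_rep_def)
  also have "\<dots> = ip e (\<pi> (\<chi> i j. c * matrix_unit a a $ i $ j) e)"
    unfolding rep_mult[symmetric] conj_transpose_column_matrix_mult c_def ..
  also have "\<dots> = ip e (sc c (\<pi> (matrix_unit a a) e))"
    using rep by (simp add: unital_star_rep_def)
  also have "\<dots> = c"
    by (simp add: ip_scale fixed ip_norm unit)
  finally have "(norm ?w)\<^sup>2 = (norm v)\<^sup>2"
    unfolding c_def of_real_eq_iff .
  then show ?thesis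
    by (simp add: power2_eq_iff_nonneg)
qed

lemma isometric_intertwiner:
  assumes "complex_hilbert sc ip" and "\<exists>x::'h. x \<noteq> 0"
  obtains V where "Modules.additive V" and "\<And>v. norm (V v) = norm v"
    and "\<And>A v. \<pi> A (V v) = V (A *v v)"
proof -
  fix a :: 'n
  obtain h :: 'h where "h \<noteq> 0"
    using assms(2) by blast
  then obtain e where fixed: "\<pi> (matrix_unit a a) e = e" and unit: "norm e = 1"
    using rep_fixed_unit_vector[OF assms(1)] by blast
  define V where "V v = \<pi> (column_matrix a v) e" for v
  have "Modules.additive V"
    using rep by (simp add: Modules.additive_def V_def column_matrix_add unital_star_rep_def)
  moreover have "norm (V v) = norm v" for v
    unfolding V_def by (rule column_map_norm[OF assms(1) fixed unit])
  moreover have "\<pi> A (V v) = V (A *v v)" for A v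
    unfolding V_def rep_mult[symmetric] column_matrix_mult ..
  ultimately show ?thesis
    using that by blast
qed

end

lemma coordinate_norm_le_one:
  fixes x :: "nat \<Rightarrow> 'x::real_normed_vector"
  assumes "0 < p" and ball: "(\<Sum>j<n. norm (x j) powr p) \<le> 1" and "j < n"
  shows "norm (x j) \<le> 1"
proof (rule ccontr)
  assume "\<not> norm (x j) \<le> 1"
  then have "1 < norm (x j) powr p"
    using \<open>0 < p\<close> powr_less_mono2[of p 1 "norm (x j)"] by simp
  also have "\<dots> \<le> (\<Sum>j<n. norm (x j) powr p)"
    using \<open>j < n\<close> by (intro member_le_sum) auto
  finally show False
    using ball by simp
qed

text \<open>If the entries of an operator matrix are bounded operators, the supremum
  defining its l^p operator norm is taken over a bounded set: every row sum is at most
  C = \<Sum>_ij |K_ij| on the unit ball.\<close>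
lemma mat_pnorm_bdd_above:
  fixes S :: "nat \<Rightarrow> nat \<Rightarrow> 'x::real_normed_vector \<Rightarrow> 'x"
  assumes "0 < p" and bounded: "\<And>i j x. norm (S i j x) \<le> K i j * norm x"
  shows "bdd_above ((\<lambda>x. (\<Sum>i<n. norm (\<Sum>j<n. S i j (x j)) powr p) powr (1 / p)) `
                     {x. (\<Sum>j<n. norm (x j) powr p) \<le> 1})"
proof -
  define C where "C = (\<Sum>i<n. \<Sum>j<n. \<bar>K i j\<bar>)"
  have "(\<Sum>i<n. norm (\<Sum>j<n. S i j (x j)) powr p) powr (1 / p) \<le> (real n * C powr p) powr (1 / p)"
    if ball: "(\<Sum>j<n. norm (x j) powr p) \<le> 1" for x
  proof -
    have row: "norm (\<Sum>j<n. S i j (x j)) \<le> C" if "i < n" for i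
    proof -
      have "norm (\<Sum>j<n. S i j (x j)) \<le> (\<Sum>j<n. norm (S i j (x j)))"
        by (rule norm_sum)
      also have "\<dots> \<le> (\<Sum>j<n. \<bar>K i j\<bar>)"
      proof (rule sum_mono)
        fix j assume "j \<in> {..<n}"
        then have "norm (x j) \<le> 1"
          using coordinate_norm_le_one[OF \<open>0 < p\<close> ball] by simp
        have "norm (S i j (x j)) \<le> K i j * norm (x j)"
          by (rule bounded)
        also have "\<dots> \<le> \<bar>K i j\<bar> * norm (x j)"
          by (simp add: mult_right_mono)
        also have "\<dots> \<le> \<bar>K i j\<bar>"
          using \<open>norm (x j) \<le> 1\<close> by (simp add: mult_left_le)
        finally show "norm (S i j (x j)) \<le> \<bar>K i j\<bar>" .
      qed
      also have "\<dots> \<le> C"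
        unfolding C_def using \<open>i < n\<close>
        by (intro member_le_sum[where f = "\<lambda>i. \<Sum>j<n. \<bar>K i j\<bar>"]) (auto simp: sum_nonneg)
      finally show ?thesis .
    qed
    have "(\<Sum>i<n. norm (\<Sum>j<n. S i j (x j)) powr p) \<le> (\<Sum>i<n. C powr p)"
      by (intro sum_mono powr_mono2) (use \<open>0 < p\<close> row in auto)
    then show ?thesis
      by (intro powr_mono2) (use \<open>0 < p\<close> in \<open>auto simp: sum_nonneg\<close>)
  qed
  then show ?thesis
    by (auto simp: bdd_above_def)
qed

lemma mat_pnorm_le_by_isometry:
  fixes T :: "nat \<Rightarrow> nat \<Rightarrow> 'x::real_normed_vector \<Rightarrow> 'x"
    and S :: "nat \<Rightarrow> nat \<Rightarrow> 'y::real_normed_vector \<Rightarrow> 'y"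
  assumes "Modules.additive V" and isometry: "\<And>v. norm (V v) = norm v"
    and intertwines: "\<And>i j v. S i j (V v) = V (T i j v)"
    and bdd: "bdd_above ((\<lambda>y. (\<Sum>i<n. norm (\<Sum>j<n. S i j (y j)) powr p) powr (1 / p)) `
                          {y. (\<Sum>j<n. norm (y j) powr p) \<le> 1})"
  shows "mat_pnorm p n T \<le> mat_pnorm p n S"
  unfolding mat_pnorm_def
proof (rule cSUP_least)
  show "{x :: nat \<Rightarrow> 'x. (\<Sum>j<n. norm (x j) powr p) \<le> 1} \<noteq> {}"
  proof -
    have "(\<lambda>_. 0) \<in> {x :: nat \<Rightarrow> 'x. (\<Sum>j<n. norm (x j) powr p) \<le> 1}"
      by simp
    then show ?thesis
      by (metis empty_iff)
  qed
next
  fix x :: "nat \<Rightarrow> 'x"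
  assume ball: "x \<in> {x. (\<Sum>j<n. norm (x j) powr p) \<le> 1}"
  have "(\<Sum>j<n. S i j ((V \<circ> x) j)) = V (\<Sum>j<n. T i j (x j))" for i
    by (simp add: intertwines Modules.additive.sum[OF \<open>Modules.additive V\<close>])
  then have "(\<Sum>i<n. norm (\<Sum>j<n. T i j (x j)) powr p) powr (1 / p) =
             (\<Sum>i<n. norm (\<Sum>j<n. S i j ((V \<circ> x) j)) powr p) powr (1 / p)"
    by (simp add: isometry)
  also have "\<dots> \<le> (SUP y\<in>{y. (\<Sum>j<n. norm (y j) powr p) \<le> 1}.
                     (\<Sum>i<n. norm (\<Sum>j<n. S i j (y j)) powr p) powr (1 / p))"
    using ball by (intro cSUP_upper[OF _ bdd]) (simp add: isometry)
  finally show "(\<Sum>i<n. norm (\<Sum>j<n. T i j (x j)) powr p) powr (1 / p) \<le> \<dots>" .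
qed

theorem lemma5p1:
  fixes p :: real
    and sc :: "complex \<Rightarrow> 'h::banach \<Rightarrow> 'h"
    and ip :: "'h \<Rightarrow> 'h \<Rightarrow> complex"
    and \<pi> :: "complex^'n::finite^'n \<Rightarrow> 'h \<Rightarrow> 'h"
    and n :: nat
    and T :: "nat \<Rightarrow> nat \<Rightarrow> complex^'n^'n"
  assumes "1 \<le> p"
    and "complex_hilbert sc ip"
    and "\<exists>x::'h. x \<noteq> 0"
    and "unital_star_rep sc ip \<pi>"
    and "1 \<le> n"
  shows "mat_pnorm p n (\<lambda>i j x. T i j *v x) \<le> mat_pnorm p n (\<lambda>i j. \<pi> (T i j))"
proof -
  obtain V where "Modules.additive V" and isometry: "\<And>v. norm (V v) = norm v"
    and intertwines: "\<And>A v. \<pi> A (V v) = V (A *v v)"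
    using isometric_intertwiner[OF assms(4,2,3)] by blast
  obtain K where "\<And>A x. norm (\<pi> A x) \<le> K A * norm x"
    using rep_bounded[OF assms(4)] by metis
  then have "bdd_above ((\<lambda>y. (\<Sum>i<n. norm (\<Sum>j<n. \<pi> (T i j) (y j)) powr p) powr (1 / p)) `
                         {y. (\<Sum>j<n. norm (y j) powr p) \<le> 1})"
    using \<open>1 \<le> p\<close> by (intro mat_pnorm_bdd_above[where K = "\<lambda>i j. K (T i j)"]) auto
  then show ?thesis
    using \<open>Modules.additive V\<close> isometry intertwines
    by (intro mat_pnorm_le_by_isometry) auto
qed

end
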